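(* Let $I$ be a compact Hausdorff space and $f_i:\mathbb{R}^m\to\mathbb{R}$, $i\in I$, convex functions such that $i\mapsto f_i(x)$ is continuous on $I$ for each $x$; set $F(i,x):=f_i(x)$, $f(x):=\max_{i\in I}f_i(x)$, $I_f(x):=\{i\in I: f_i(x)=f(x)\}$. Let $\bar x\in\mathbb{R}^m$ with $f(\bar x)=0$. Then the following are equivalent: (i) $\min_{\|h\|=1}f'(\bar x,h)\neq0$; (ii) there exist constants $c,\varepsilon>0$ such that whenever $G\in C(I\times\mathbb{R}^m,\mathbb{R})$ is such that each $g_i:=G(i,\cdot)$ is convex, and, with $g(x):=\max_{i\in I}g_i(x)$ and $I_g(x):=\{i\in I:g_i(x)=g(x)\}$, one has: $g(\bar x)=0$; $I_g(\bar x)\subseteq I_f(\bar x)$ if $\min_{\|h\|=1}f'(\bar x,h)<0$; $I_f(\bar x)\subseteq I_g(\bar x)$ if $\min_{\|h\|=1}f'(\bar x,h)>0$; and $$\limsup_{x\to\bar x}\frac{|f_i(x)-g_i(x)-(f_i(\bar x)-g_i(\bar x))|}{\|x-\bar x\|}\le\varepsilon\quad\text{for all } i\in I_f(\bar x)\cap I_g(\bar x),$$ then $\tau_{\min}(G,\bar x)\le c$; (iii) there exist constants $c,\varepsilon>0$ such that for all $u^*\in\mathbb{R}^m$ with $\|u^*\|\le1$, one has $\tau_{\min}(G,\bar x)\le c$, where $G\in C(I\times\mathbb{R}^m,\mathbb{R})$ is defined by $G(i,x):=f_i(x)+\varepsilon\langle u^*,x-\bar x\rangle$.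
   Context: $\mathbb{R}^m$ carries the Euclidean norm, $B(\bar x,\delta)$ is the closed ball of radius $\delta$ around $\bar x$, $d(x,D)=\inf\{\|x-y\|:y\in D\}$ (with $\inf\emptyset=+\infty$). For a convex $\varphi$, $\varphi'(x,h):=\lim_{t\to0^+}\frac{\varphi(x+th)-\varphi(x)}{t}$. For $G\in C(I\times\mathbb{R}^m,\mathbb{R})$ with $g_i:=G(i,\cdot)$ convex and $g:=\max_{i\in I}g_i$, the solution set is $S_G:=\{x: g_i(x)\le0\ \forall i\in I\}$ and the local error bound modulus at $\bar x$ is $\tau_{\min}(G,\bar x):=\inf\{\tau>0:\exists\delta>0\text{ with } d(x,S_G)\le\tau[g(x)]_+\ \forall x\in B(\bar x,\delta)\}$, where $[t]_+=\max\{t,0\}$ and $\inf\emptyset=+\infty$. *)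

theory Defs
  imports "HOL-Analysis.Analysis"
begin

definition dirderiv :: "('a::real_normed_vector \<Rightarrow> real) \<Rightarrow> 'a \<Rightarrow> 'a \<Rightarrow> real" where
  "dirderiv \<phi> x h = Lim (at_right (0::real)) (\<lambda>t. (\<phi> (x + t *\<^sub>R h) - \<phi> x) / t)"

definition fmax :: "('i \<Rightarrow> 'a \<Rightarrow> real) \<Rightarrow> 'a \<Rightarrow> real" where
  "fmax F x = (SUP i. F i x)"

definition active :: "('i \<Rightarrow> 'a \<Rightarrow> real) \<Rightarrow> 'a \<Rightarrow> 'i set" where
  "active F x = {i. F i x = fmax F x}"

definition mindir :: "('i \<Rightarrow> 'a::real_normed_vector \<Rightarrow> real) \<Rightarrow> 'a \<Rightarrow> real" where
  "mindir F x = Inf {dirderiv (fmax F) x h | h. norm h = 1}"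

definition solset :: "('i \<Rightarrow> 'a \<Rightarrow> real) \<Rightarrow> 'a set" where
  "solset G = {x. \<forall>i. G i x \<le> 0}"

definition edist :: "'a::metric_space \<Rightarrow> 'a set \<Rightarrow> ereal" where
  "edist x D = (if D = {} then \<infinity> else ereal (infdist x D))"

text \<open>Local error bound modulus, with inf of the empty set = +infinity.\<close>
definition tau_min :: "('i \<Rightarrow> 'a::metric_space \<Rightarrow> real) \<Rightarrow> 'a \<Rightarrow> ereal" where
  "tau_min G xb = Inf {ereal \<tau> | \<tau>. \<tau> > 0 \<and> (\<exists>\<delta>>0. \<forall>x\<in>cball xb \<delta>.
        edist x (solset G) \<le> ereal (\<tau> * max (fmax G x) 0))}"

end

theory Submission
  imports Defs
begin

text \<open>Write m for the minimum of f'(xb, h) over unit directions h.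

  If m > 0, then for every unit direction h some index active at xb grows at least like (3m/4) s
  along xb + s h: otherwise the active indices would all descend along h, and by compactness of the
  index space so would f, contradicting f'(xb, h) \<ge> m. A perturbation keeping these indices active
  and (m/4)-close to first order therefore grows like (m/4) |x - xb|, so xb is its only solution and
  the modulus is at most 4/m.

  If m < 0, pick h with f'(xb, h) < m/2. The same compactness argument turns h into a descent
  direction of the perturbed max function g, and convexity then moves every nearby x with g x > 0
  into the solution set along h within a distance proportional to g x.

  If m = 0, tilting f by a small linear term along an almost flat direction h keeps the solution
  set in a half-space while g grows arbitrarily slowly along h, so the modulus is unbounded.
  Linear tilts of size \<epsilon> are admissible perturbations, which gives (ii) \<Longrightarrow> (iii).\<close>

section \<open>Suprema over a compact index space\<close>

lemma fmax_upper:
  fixes H :: "'i::topological_space \<Rightarrow> 'a \<Rightarrow> real"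
  assumes "compact (UNIV :: 'i set)" "continuous_on UNIV (\<lambda>i. H i x)"
  shows "H i x \<le> fmax H x"
proof -
  have "bounded (range (\<lambda>i. H i x))"
    using assms by (intro compact_imp_bounded compact_continuous_image)
  then show ?thesis
    unfolding fmax_def by (intro cSUP_upper bounded_imp_bdd_above) auto
qed

lemma fmax_least:
  fixes H :: "'i \<Rightarrow> 'a \<Rightarrow> real"
  assumes "\<And>i. H i x \<le> c"
  shows "fmax H x \<le> c"
  unfolding fmax_def using assms by (intro cSUP_least) auto

lemma fmax_le_iff:
  fixes H :: "'i::topological_space \<Rightarrow> 'a \<Rightarrow> real"
  assumes "compact (UNIV :: 'i set)" "continuous_on UNIV (\<lambda>i. H i x)"
  shows "fmax H x \<le> c \<longleftrightarrow> (\<forall>i. H i x \<le> c)"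
  using fmax_upper[of H x, OF assms] fmax_least[of H x c] by (meson order_trans)

lemma solset_iff_fmax_nonpos:
  fixes H :: "'i::topological_space \<Rightarrow> 'a \<Rightarrow> real"
  assumes "compact (UNIV :: 'i set)" "continuous_on UNIV (\<lambda>i. H i x)"
  shows "x \<in> solset H \<longleftrightarrow> fmax H x \<le> 0"
  using fmax_le_iff[of H x, OF assms] by (simp add: solset_def)

lemma fmax_add:
  fixes H :: "'i::topological_space \<Rightarrow> 'a \<Rightarrow> real"
  assumes "compact (UNIV :: 'i set)" "continuous_on UNIV (\<lambda>i. H i x)"
  shows "fmax (\<lambda>i y. H i y + k y) x = fmax H x + k x"
proof -
  have "continuous_on UNIV (\<lambda>i. H i x + k x)"
    using assms(2) by (intro continuous_intros)
  then have "fmax (\<lambda>i y. H i y + k y) x \<le> c \<longleftrightarrow> fmax H x + k x \<le> c" for c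
    using fmax_le_iff[of H x, OF assms, of "c - k x"]
      fmax_le_iff[of "\<lambda>i y. H i y + k y" x, OF assms(1)]
    by (simp add: algebra_simps)
  then show ?thesis by (meson order.antisym order.refl)
qed

lemma convex_on_fmax:
  fixes H :: "'i::topological_space \<Rightarrow> 'a::real_vector \<Rightarrow> real"
  assumes "compact (UNIV :: 'i set)" "\<And>x. continuous_on UNIV (\<lambda>i. H i x)"
    and "\<And>i. convex_on UNIV (H i)"
  shows "convex_on UNIV (fmax H)"
proof (rule convex_onI[OF _ convex_UNIV])
  fix t :: real and x y assume "0 < t" "t < 1"
  have "H i ((1 - t) *\<^sub>R x + t *\<^sub>R y) \<le> (1 - t) * fmax H x + t * fmax H y" for i
  proof -
    have "H i ((1 - t) *\<^sub>R x + t *\<^sub>R y) \<le> (1 - t) * H i x + t * H i y"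
      using convex_onD[OF assms(3)] \<open>0 < t\<close> \<open>t < 1\<close> by simp
    also have "\<dots> \<le> (1 - t) * fmax H x + t * fmax H y"
      using fmax_upper[of H, OF assms(1,2)] \<open>0 < t\<close> \<open>t < 1\<close> by (intro add_mono mult_left_mono) auto
    finally show ?thesis .
  qed
  then show "fmax H ((1 - t) *\<^sub>R x + t *\<^sub>R y) \<le> (1 - t) * fmax H x + t * fmax H y"
    by (rule fmax_least)
qed

lemma continuous_on_fmax:
  fixes H :: "'i::topological_space \<Rightarrow> 'a::euclidean_space \<Rightarrow> real"
  assumes "compact (UNIV :: 'i set)" "\<And>x. continuous_on UNIV (\<lambda>i. H i x)"
    and "\<And>i. convex_on UNIV (H i)"
  shows "continuous_on UNIV (fmax H)"
  by (rule convex_on_continuous[OF open_UNIV convex_on_fmax[OF assms]])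

lemma continuous_on_slice:
  fixes G :: "'i::topological_space \<Rightarrow> 'a::topological_space \<Rightarrow> real"
  assumes "continuous_on UNIV (\<lambda>(i, x). G i x)"
  shows "continuous_on UNIV (\<lambda>i. G i x)"
proof -
  have "continuous_on UNIV ((\<lambda>(i, x). G i x) \<circ> (\<lambda>i. (i, x)))"
    by (rule continuous_on_compose[OF _ continuous_on_subset[OF assms]])
      (auto intro: continuous_intros)
  then show ?thesis by (simp add: o_def)
qed

section \<open>Slopes and directional derivatives of convex functions\<close>

lemma convex_on_line:
  fixes \<phi> :: "'a::real_vector \<Rightarrow> real"
  assumes "convex_on UNIV \<phi>"
  shows "convex_on UNIV (\<lambda>t. \<phi> (x + t *\<^sub>R h))"
proof (rule convex_onI[OF _ convex_UNIV])
  fix t a b :: real assume "0 < t" "t < 1"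
  have "x + ((1 - t) * a + t * b) *\<^sub>R h = (1 - t) *\<^sub>R (x + a *\<^sub>R h) + t *\<^sub>R (x + b *\<^sub>R h)"
    by (simp add: algebra_simps)
  then show "\<phi> (x + ((1 - t) *\<^sub>R a + t *\<^sub>R b) *\<^sub>R h) \<le> (1 - t) * \<phi> (x + a *\<^sub>R h) + t * \<phi> (x + b *\<^sub>R h)"
    using convex_onD[OF assms, of t] \<open>0 < t\<close> \<open>t < 1\<close> by simp
qed

lemma convex_on_line_slope_le:
  fixes \<phi> :: "'a::real_vector \<Rightarrow> real"
  assumes "convex_on UNIV \<phi>" "a < b" "b < c"
  shows "(\<phi> (x + b *\<^sub>R h) - \<phi> (x + a *\<^sub>R h)) / (b - a)
           \<le> (\<phi> (x + c *\<^sub>R h) - \<phi> (x + a *\<^sub>R h)) / (c - a)"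
    and "(\<phi> (x + c *\<^sub>R h) - \<phi> (x + a *\<^sub>R h)) / (c - a)
           \<le> (\<phi> (x + c *\<^sub>R h) - \<phi> (x + b *\<^sub>R h)) / (c - b)"
  using convex_on_slope_le[OF convex_on_line[OF assms(1)] UNIV_I UNIV_I assms(2,3), of x h]
    assms(2,3)
  by (simp_all add: field_simps)

lemma convex_on_slope_mono:
  fixes \<phi> :: "'a::real_vector \<Rightarrow> real"
  assumes "convex_on UNIV \<phi>" "0 < s" "s \<le> t"
  shows "(\<phi> (x + s *\<^sub>R h) - \<phi> x) / s \<le> (\<phi> (x + t *\<^sub>R h) - \<phi> x) / t"
  using convex_on_line_slope_le(1)[OF assms(1), of 0 s t x h] assms(2,3)
  by (cases "s = t") auto

lemma convex_on_backward_diff_le_slope: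
  fixes \<phi> :: "'a::real_vector \<Rightarrow> real"
  assumes "convex_on UNIV \<phi>" "0 < t"
  shows "\<phi> x - \<phi> (x - h) \<le> (\<phi> (x + t *\<^sub>R h) - \<phi> x) / t"
proof -
  have "-1 < (0::real)" by simp
  note slopes = convex_on_line_slope_le[OF assms(1) this assms(2), of x h]
  show ?thesis
    using order_trans[OF slopes] by simp
qed

lemma convex_on_ray_bound_shrink:
  fixes \<phi> :: "'a::real_vector \<Rightarrow> real"
  assumes "convex_on UNIV \<phi>" "\<phi> x \<le> 0" "0 < s" "s \<le> t" "\<phi> (x + t *\<^sub>R h) \<le> c * t"
  shows "\<phi> (x + s *\<^sub>R h) \<le> c * s"
proof -
  have "\<phi> (x + s *\<^sub>R h) - \<phi> x \<le> (s / t) * (\<phi> (x + t *\<^sub>R h) - \<phi> x)"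
    using convex_on_slope_mono[OF assms(1,3,4), of x h] assms(3,4) by (simp add: field_simps)
  moreover have "(s / t) * \<phi> (x + t *\<^sub>R h) \<le> (s / t) * (c * t)"
    using assms(3,4,5) by (intro mult_left_mono) auto
  moreover have "(s / t) * (c * t) = c * s"
    using assms(3,4) by simp
  moreover have "(1 - s / t) * \<phi> x \<le> 0"
    using assms(2,3,4) by (intro mult_nonneg_nonpos) auto
  ultimately show ?thesis
    by (simp add: algebra_simps)
qed

lemma convex_on_negative_imp_slope_less:
  fixes \<phi> :: "'a::real_vector \<Rightarrow> real"
  assumes "convex_on UNIV \<phi>" "\<phi> x < 0"
  shows "\<exists>s>0. \<phi> (x + s *\<^sub>R h) < c * s"
proof -
  define K where "K = \<bar>\<phi> (x + h) - \<phi> x - c\<bar> + 1"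
  define s where "s = min 1 (- \<phi> x / (2 * K))"
  have K: "0 < K" by (simp add: K_def add_nonneg_pos)
  have s: "0 < s" "s \<le> 1"
    using assms(2) K by (simp_all add: s_def divide_neg_pos)
  have "s * K \<le> (- \<phi> x / (2 * K)) * K"
    using K by (intro mult_right_mono) (simp_all add: s_def)
  then have sK: "s * K \<le> - \<phi> x / 2"
    using K by simp
  have "\<phi> (x + s *\<^sub>R h) - \<phi> x \<le> s * (\<phi> (x + h) - \<phi> x)"
    using convex_on_slope_mono[OF assms(1) s(1,2), of x h] s(1) by (simp add: field_simps)
  also have "\<dots> \<le> s * (K + c)"
    using s(1) unfolding K_def by (intro mult_left_mono) arith+
  finally have "\<phi> (x + s *\<^sub>R h) \<le> \<phi> x + s * K + c * s"
    by (simp add: algebra_simps)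
  also have "\<dots> < c * s"
    using sK assms(2) by simp
  finally show ?thesis
    using s(1) by blast
qed

lemma convex_on_inner_affine: "convex_on UNIV (\<lambda>x. e * inner u (x - xb))"
proof (rule convex_onI[OF _ convex_UNIV])
  fix t :: real and x y :: 'a
  have "(1 - t) *\<^sub>R x + t *\<^sub>R y - xb = (1 - t) *\<^sub>R (x - xb) + t *\<^sub>R (y - xb)"
    by (simp add: algebra_simps)
  then show "e * inner u ((1 - t) *\<^sub>R x + t *\<^sub>R y - xb)
      \<le> (1 - t) * (e * inner u (x - xb)) + t * (e * inner u (y - xb))"
    by (simp add: inner_add_right algebra_simps)
qed

lemma convex_on_slopes_bdd_below:
  fixes \<phi> :: "'a::real_normed_vector \<Rightarrow> real"
  assumes "convex_on UNIV \<phi>"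
  shows "bdd_below ((\<lambda>t. (\<phi> (x + t *\<^sub>R h) - \<phi> x) / t) ` {0<..})"
  using convex_on_backward_diff_le_slope[OF assms] by (intro bdd_belowI2) auto

lemma convex_on_dirderiv_eq_Inf:
  fixes \<phi> :: "'a::real_normed_vector \<Rightarrow> real"
  assumes "convex_on UNIV \<phi>"
  shows "dirderiv \<phi> x h = (INF t\<in>{0<..}. (\<phi> (x + t *\<^sub>R h) - \<phi> x) / t)"
proof -
  have "((\<lambda>t. (\<phi> (x + t *\<^sub>R h) - \<phi> x) / t) \<longlongrightarrow> (INF t\<in>{0<..}. (\<phi> (x + t *\<^sub>R h) - \<phi> x) / t))
          (at_right 0)"
    using Lim_right_bound[of UNIV 0 "\<lambda>t. (\<phi> (x + t *\<^sub>R h) - \<phi> x) / t" "\<phi> x - \<phi> (x - h)"]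
      convex_on_slope_mono[OF assms] convex_on_backward_diff_le_slope[OF assms]
    by simp
  then show ?thesis
    unfolding dirderiv_def by (rule tendsto_Lim[rotated]) simp
qed

lemma convex_on_dirderiv_le:
  fixes \<phi> :: "'a::real_normed_vector \<Rightarrow> real"
  assumes "convex_on UNIV \<phi>" "0 < t"
  shows "t * dirderiv \<phi> x h \<le> \<phi> (x + t *\<^sub>R h) - \<phi> x"
proof -
  have "dirderiv \<phi> x h \<le> (\<phi> (x + t *\<^sub>R h) - \<phi> x) / t"
    unfolding convex_on_dirderiv_eq_Inf[OF assms(1)]
    using assms(2) by (intro cINF_lower convex_on_slopes_bdd_below[OF assms(1)]) auto
  then show ?thesis
    using assms(2) by (simp add: field_simps)
qed

lemma convex_on_dirderiv_lessD:
  fixes \<phi> :: "'a::real_normed_vector \<Rightarrow> real"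
  assumes "convex_on UNIV \<phi>" "dirderiv \<phi> x h < a"
  shows "\<exists>t>0. \<forall>s. 0 < s \<longrightarrow> s \<le> t \<longrightarrow> \<phi> (x + s *\<^sub>R h) - \<phi> x < a * s"
proof -
  obtain t where t: "0 < t" "(\<phi> (x + t *\<^sub>R h) - \<phi> x) / t < a"
    using assms(2) unfolding convex_on_dirderiv_eq_Inf[OF assms(1)]
    by (auto simp: cINF_less_iff[OF _ convex_on_slopes_bdd_below[OF assms(1)]])
  have "\<phi> (x + s *\<^sub>R h) - \<phi> x < a * s" if "0 < s" "s \<le> t" for s
    using le_less_trans[OF convex_on_slope_mono[OF assms(1) that] t(2)] that
    by (simp add: field_simps)
  then show ?thesis
    using t(1) by blast
qed

lemma convex_on_backward_diff_le_dirderiv: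
  fixes \<phi> :: "'a::real_normed_vector \<Rightarrow> real"
  assumes "convex_on UNIV \<phi>"
  shows "\<phi> x - \<phi> (x - h) \<le> dirderiv \<phi> x h"
  unfolding convex_on_dirderiv_eq_Inf[OF assms]
  using convex_on_backward_diff_le_slope[OF assms] by (intro cINF_greatest) auto

lemma convex_on_nonneg_of_dirderiv_nonneg:
  fixes \<phi> :: "'a::real_normed_vector \<Rightarrow> real"
  assumes "convex_on UNIV \<phi>" "\<phi> x0 = 0" "\<And>h. norm h = 1 \<Longrightarrow> 0 \<le> dirderiv \<phi> x0 h"
  shows "0 \<le> \<phi> y"
proof (cases "y = x0")
  case False
  define t where "t = norm (y - x0)"
  define h where "h = (1 / t) *\<^sub>R (y - x0)"
  have t: "0 < t" "x0 + t *\<^sub>R h = y" and "norm h = 1"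
    using False by (simp_all add: t_def h_def)
  then have "0 \<le> t * dirderiv \<phi> x0 h"
    using assms(3) by simp
  also have "\<dots> \<le> \<phi> y - \<phi> x0"
    using convex_on_dirderiv_le[OF assms(1) t(1), of x0 h] t(2) by simp
  finally show ?thesis
    using assms(2) by simp
qed (use assms(2) in simp)

lemma mindir_le_dirderiv:
  fixes F :: "'i \<Rightarrow> 'a::euclidean_space \<Rightarrow> real"
  assumes "convex_on UNIV (fmax F)" "norm h = 1"
  shows "mindir F x \<le> dirderiv (fmax F) x h"
proof -
  have "compact (fmax F ` cball x 1)"
    using convex_on_continuous[OF open_UNIV assms(1)]
    by (intro compact_continuous_image compact_cball) (auto intro: continuous_on_subset)
  then obtain M where M: "\<And>y. y \<in> cball x 1 \<Longrightarrow> fmax F y \<le> M"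
    by (meson bounded_imp_bdd_above bdd_above.E compact_imp_bounded imageI)
  have "fmax F x - M \<le> dirderiv (fmax F) x k" if "norm k = 1" for k
    using convex_on_backward_diff_le_dirderiv[OF assms(1), of x k] M[of "x - k"] that
    by (simp add: dist_norm)
  then have "bdd_below {dirderiv (fmax F) x k | k. norm k = 1}"
    by (intro bdd_belowI[of _ "fmax F x - M"]) auto
  then show ?thesis
    unfolding mindir_def using assms(2) by (intro cInf_lower) auto
qed

lemma mindir_lessD:
  fixes F :: "'i \<Rightarrow> 'a::euclidean_space \<Rightarrow> real"
  assumes "mindir F x < a"
  shows "\<exists>h. norm h = 1 \<and> dirderiv (fmax F) x h < a"
proof -
  obtain b :: 'a where "norm b = 1"
    using norm_Basis SOME_Basis by blast
  then have "{dirderiv (fmax F) x h | h. norm h = 1} \<noteq> {}"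
    by blast
  from cInf_lessD[OF this assms[unfolded mindir_def]] show ?thesis
    by blast
qed

section \<open>Joint continuity of a compact family of convex functions\<close>

lemma convex_on_lipschitz_on_cball:
  fixes \<phi> :: "'a::real_normed_vector \<Rightarrow> real"
  assumes cvx: "convex_on UNIV \<phi>" and "0 \<le> r"
    and bound: "\<And>y. y \<in> cball x0 (r + 1) \<Longrightarrow> \<bar>\<phi> y\<bar> \<le> B"
  shows "(2 * B)-lipschitz_on (cball x0 r) \<phi>"
proof -
  have increase: "\<phi> z - \<phi> y \<le> 2 * B * dist z y" if "y \<in> cball x0 r" "z \<in> cball x0 r" for y z
  proof (cases "z = y")
    case False
    define d where "d = dist z y"
    define h where "h = (1 / d) *\<^sub>R (z - y)"
    have d: "0 < d" using False by (simp add: d_def)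
    have z: "y + d *\<^sub>R h = z" using d by (simp add: h_def)
    have "norm h = 1" using d by (simp add: h_def d_def dist_norm)
    then have far: "y + (d + 1) *\<^sub>R h \<in> cball x0 (r + 1)"
      using that(2) norm_triangle_ineq[of "x0 - z" "- h"] z
      by (simp add: dist_norm algebra_simps)
    have "(\<phi> z - \<phi> y) / d \<le> (\<phi> (y + (d + 1) *\<^sub>R h) - \<phi> y) / (d + 1)"
      using convex_on_slope_mono[OF cvx d, of "d + 1" y h] z by simp
    also have "\<dots> \<le> 2 * B / (d + 1)"
      using bound[OF far] bound[of y] that(1) d by (intro divide_right_mono) auto
    also have "\<dots> \<le> 2 * B"
      using bound[of y] that(1) d \<open>0 \<le> r\<close> by (simp add: field_simps)
    finally show ?thesis
      using d by (simp add: d_def field_simps)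
  qed simp
  have "0 \<le> B"
    using bound[of x0] \<open>0 \<le> r\<close> by simp
  show ?thesis
  proof (intro lipschitz_onI)
    fix y z assume "y \<in> cball x0 r" "z \<in> cball x0 r"
    then show "dist (\<phi> y) (\<phi> z) \<le> 2 * B * dist y z"
      using increase[of y z] increase[of z y] by (simp add: dist_real_def dist_commute abs_le_iff)
  qed (use \<open>0 \<le> B\<close> in simp)
qed

lemma convex_family_bounded_on_cball:
  fixes F :: "'i::topological_space \<Rightarrow> 'a::euclidean_space \<Rightarrow> real"
  assumes cpt: "compact (UNIV :: 'i set)" and cont: "\<And>x. continuous_on UNIV (\<lambda>i. F i x)"
    and cvx: "\<And>i. convex_on UNIV (F i)"
  shows "\<exists>B. \<forall>j. \<forall>y\<in>cball x0 r. \<bar>F j y\<bar> \<le> B"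
proof -
  have "compact (fmax F ` cball x0 r)"
    using continuous_on_fmax[OF cpt cont cvx]
    by (intro compact_continuous_image compact_cball) (auto intro: continuous_on_subset)
  then have "bdd_above (fmax F ` cball x0 r)"
    by (intro bounded_imp_bdd_above compact_imp_bounded)
  then obtain M where "\<And>y. y \<in> cball x0 r \<Longrightarrow> fmax F y \<le> M"
    unfolding bdd_above_def by blast
  then have M: "F j y \<le> M" if "y \<in> cball x0 r" for j y
    using fmax_upper[of F y, OF cpt cont, of j] that by fastforce
  have "bdd_below (range (\<lambda>j. F j x0))"
    by (intro bounded_imp_bdd_below compact_imp_bounded compact_continuous_image cont cpt)
  then obtain m where m: "\<And>j. m \<le> F j x0"
    unfolding bdd_below_def by blast
  have lower: "2 * m - M \<le> F j y" if y: "y \<in> cball x0 r" for j y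
  proof -
    have "(1 / 2) *\<^sub>R y + (1 / 2) *\<^sub>R (2 *\<^sub>R x0 - y) = x0"
      by (simp add: algebra_simps)
    then have "F j x0 \<le> (1 / 2) * F j y + (1 / 2) * F j (2 *\<^sub>R x0 - y)"
      using convex_onD[OF cvx, of "1 / 2" y "2 *\<^sub>R x0 - y" j] by simp
    moreover have "dist x0 (2 *\<^sub>R x0 - y) = dist x0 y"
      by (simp add: dist_norm scaleR_2 norm_minus_commute)
    then have "F j (2 *\<^sub>R x0 - y) \<le> M"
      using y by (intro M) simp
    ultimately show ?thesis
      using m[of j] by linarith
  qed
  then have "\<bar>F j y\<bar> \<le> \<bar>M\<bar> + \<bar>2 * m - M\<bar>" if "y \<in> cball x0 r" for j y
    using M[OF that, of j] lower[OF that, of j] by arith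
  then show ?thesis
    by blast
qed

lemma continuous_on_convex_family:
  fixes F :: "'i::t2_space \<Rightarrow> 'a::euclidean_space \<Rightarrow> real"
  assumes cpt: "compact (UNIV :: 'i set)" and cont: "\<And>x. continuous_on UNIV (\<lambda>i. F i x)"
    and cvx: "\<And>i. convex_on UNIV (F i)"
  shows "continuous_on UNIV (\<lambda>(i, x). F i x)"
proof (rule continuous_at_imp_continuous_on, intro ballI)
  fix p :: "'i \<times> 'a"
  obtain i0 x0 where p: "p = (i0, x0)" by fastforce
  obtain B where "\<And>j y. y \<in> cball x0 2 \<Longrightarrow> \<bar>F j y\<bar> \<le> B"
    using convex_family_bounded_on_cball[OF cpt cont cvx, of x0 2] by blast
  then have lip: "(2 * B)-lipschitz_on (cball x0 1) (F j)" for j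
    using convex_on_lipschitz_on_cball[OF cvx[of j], of 1 x0 B] by simp
  have snd_lim: "((\<lambda>q. snd q) \<longlongrightarrow> x0) (at p)" and fst_lim: "((\<lambda>q. fst q) \<longlongrightarrow> i0) (at p)"
    using tendsto_fst[OF tendsto_ident_at] tendsto_snd[OF tendsto_ident_at] unfolding p by auto
  have "\<forall>\<^sub>F q in at p. dist (snd q) x0 < 1"
    using tendstoD[OF snd_lim, of 1] by simp
  then have "\<forall>\<^sub>F q in at p. norm (F (fst q) (snd q) - F (fst q) x0) \<le> 2 * B * dist (snd q) x0"
  proof eventually_elim
    case (elim q)
    then have "snd q \<in> cball x0 1"
      by (simp add: dist_commute)
    then show ?case
      using lipschitz_onD[OF lip, of "snd q" x0] by (simp add: dist_real_def)
  qed
  moreover have "((\<lambda>q. 2 * B * dist (snd q) x0) \<longlongrightarrow> 0) (at p)"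
    by (rule tendsto_mult_right_zero) (rule tendsto_dist_iff[THEN iffD1, OF snd_lim])
  ultimately have "((\<lambda>q. F (fst q) (snd q) - F (fst q) x0) \<longlongrightarrow> 0) (at p)"
    by (rule Lim_null_comparison)
  moreover have "((\<lambda>q. F (fst q) x0) \<longlongrightarrow> F i0 x0) (at p)"
    by (rule continuous_on_tendsto_compose[OF cont fst_lim]) auto
  ultimately have "((\<lambda>q. (F (fst q) (snd q) - F (fst q) x0) + F (fst q) x0) \<longlongrightarrow> 0 + F i0 x0) (at p)"
    by (rule tendsto_add)
  then show "isCont (\<lambda>(i, x). F i x) p"
    unfolding isCont_def p by (simp add: case_prod_unfold)
qed

section \<open>Uniform descent along a ray\<close>

text \<open>Each index descends below slope c at some step S i, an open condition in the index; a
  finite subcover yields a common step, and convexity transfers the bound to all shorter steps.\<close>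

lemma uniform_slope_bound:
  fixes H :: "'i::topological_space \<Rightarrow> 'a::real_vector \<Rightarrow> real"
  assumes cpt: "compact (UNIV :: 'i set)" and cont: "\<And>x. continuous_on UNIV (\<lambda>i. H i x)"
    and cvx: "\<And>i. convex_on UNIV (H i)" and nonpos: "\<And>i. H i x \<le> 0"
    and active: "\<And>i. H i x = 0 \<Longrightarrow> \<exists>s>0. H i (x + s *\<^sub>R h) < c * s"
  shows "\<exists>s0>0. \<forall>j s. 0 < s \<longrightarrow> s \<le> s0 \<longrightarrow> H j (x + s *\<^sub>R h) \<le> c * s"
proof -
  have "\<exists>s>0. H i (x + s *\<^sub>R h) < c * s" for i
    using active[of i] convex_on_negative_imp_slope_less[OF cvx, of i x] nonpos[of i]
    by (cases "H i x = 0") auto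
  then obtain S where S: "\<And>i. 0 < S i" "\<And>i. H i (x + S i *\<^sub>R h) < c * S i"
    by metis
  define U where "U i = {j. H j (x + S i *\<^sub>R h) < c * S i}" for i
  have "\<And>i. i \<in> UNIV \<Longrightarrow> open (U i)"
    unfolding U_def by (rule open_Collect_less[OF cont continuous_on_const])
  moreover have "UNIV \<subseteq> (\<Union>i\<in>UNIV. U i)"
    using S(2) by (auto simp: U_def)
  ultimately obtain C where C: "C \<subseteq> UNIV" "finite C" "UNIV \<subseteq> (\<Union>i\<in>C. U i)"
    by (rule compactE_image[OF cpt])
  then have "C \<noteq> {}" by blast
  define s0 where "s0 = Min (S ` C)"
  have "0 < s0"
    using C(2) \<open>C \<noteq> {}\<close> S(1) by (simp add: s0_def)
  moreover have "H j (x + s *\<^sub>R h) \<le> c * s" if "0 < s" "s \<le> s0" for j s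
  proof -
    obtain i where i: "i \<in> C" "j \<in> U i"
      using C(3) by blast
    have "s0 \<le> S i"
      unfolding s0_def using C(2) i(1) by (intro Min_le) auto
    then have "s \<le> S i"
      using that(2) by linarith
    then show ?thesis
      using convex_on_ray_bound_shrink[OF cvx[of j] nonpos[of j] that(1), of "S i" h c] i(2)
      by (simp add: U_def)
  qed
  ultimately show ?thesis
    by blast
qed

lemma dirderiv_fmax_gt_imp_active_index:
  fixes F :: "'i::topological_space \<Rightarrow> 'a::real_normed_vector \<Rightarrow> real"
  assumes cpt: "compact (UNIV :: 'i set)" and cont: "\<And>x. continuous_on UNIV (\<lambda>i. F i x)"
    and cvx: "\<And>i. convex_on UNIV (F i)" and f0: "fmax F x = 0"
    and a: "a < dirderiv (fmax F) x h"
  shows "\<exists>i. F i x = 0 \<and> (\<forall>s>0. a * s \<le> F i (x + s *\<^sub>R h))"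
proof (rule ccontr)
  assume "\<not> ?thesis"
  then have active: "\<exists>s>0. F i (x + s *\<^sub>R h) < a * s" if "F i x = 0" for i
    using that by (auto simp: not_le)
  have nonpos: "F i x \<le> 0" for i
    using fmax_upper[of F x, OF cpt cont] f0 by simp
  obtain s0 where s0: "0 < s0" "\<forall>j s. 0 < s \<longrightarrow> s \<le> s0 \<longrightarrow> F j (x + s *\<^sub>R h) \<le> a * s"
    using uniform_slope_bound[OF cpt cont cvx nonpos active] by blast
  have "F j (x + s0 *\<^sub>R h) \<le> s0 * a" for j
    using s0 by (metis mult.commute order_refl)
  then have "fmax F (x + s0 *\<^sub>R h) \<le> s0 * a"
    by (rule fmax_least)
  moreover have "s0 * dirderiv (fmax F) x h \<le> fmax F (x + s0 *\<^sub>R h) - fmax F x"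
    by (rule convex_on_dirderiv_le[OF convex_on_fmax[OF cpt cont cvx] s0(1)])
  moreover have "s0 * a < s0 * dirderiv (fmax F) x h"
    using a s0(1) by simp
  ultimately show False
    using f0 by linarith
qed

section \<open>Estimates for the error bound modulus\<close>

lemma tau_min_le:
  assumes "0 < \<tau>" "0 < \<delta>" "solset G \<noteq> {}"
    and "\<And>x. x \<in> cball xb \<delta> \<Longrightarrow> infdist x (solset G) \<le> \<tau> * max (fmax G x) 0"
  shows "tau_min G xb \<le> ereal \<tau>"
proof -
  have "\<forall>x\<in>cball xb \<delta>. edist x (solset G) \<le> ereal (\<tau> * max (fmax G x) 0)"
    using assms(3,4) by (simp add: edist_def)
  then show ?thesis
    unfolding tau_min_def using assms(1,2) by (intro Inf_lower) blast
qed

lemma tau_min_ge: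
  assumes "solset G \<noteq> {}"
    and "\<And>\<tau> \<delta>. 0 < \<tau> \<Longrightarrow> 0 < \<delta> \<Longrightarrow>
           (\<forall>x\<in>cball xb \<delta>. infdist x (solset G) \<le> \<tau> * max (fmax G x) 0) \<Longrightarrow> c \<le> \<tau>"
  shows "ereal c \<le> tau_min G xb"
  unfolding tau_min_def
proof (rule Inf_greatest)
  fix a assume "a \<in> {ereal \<tau> |\<tau>. 0 < \<tau> \<and> (\<exists>\<delta>>0. \<forall>x\<in>cball xb \<delta>.
      edist x (solset G) \<le> ereal (\<tau> * max (fmax G x) 0))}"
  then obtain \<tau> \<delta> where "a = ereal \<tau>" "0 < \<tau>" "0 < \<delta>"
    and "\<forall>x\<in>cball xb \<delta>. edist x (solset G) \<le> ereal (\<tau> * max (fmax G x) 0)"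
    by blast
  then show "ereal c \<le> a"
    using assms by (simp add: edist_def)
qed

lemma infdist_ge_of_halfspace:
  fixes S :: "'a::real_inner set"
  assumes "S \<noteq> {}" "norm h = 1" "\<And>y. y \<in> S \<Longrightarrow> inner h (y - x) \<le> 0"
  shows "s \<le> infdist (x + s *\<^sub>R h) S"
  unfolding infdist_notempty[OF assms(1)]
proof (rule cINF_greatest[OF assms(1)])
  fix y assume "y \<in> S"
  have "s = inner h (s *\<^sub>R h)"
    using assms(2) by (simp add: power2_norm_eq_inner[symmetric])
  also have "\<dots> \<le> inner h (s *\<^sub>R h) - inner h (y - x)"
    using assms(3)[OF \<open>y \<in> S\<close>] by simp
  also have "\<dots> = inner h (x + s *\<^sub>R h - y)"
    by (simp add: inner_diff_right inner_add_right)
  also have "\<dots> \<le> norm h * norm (x + s *\<^sub>R h - y)"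
    by (rule norm_cauchy_schwarz)
  finally show "s \<le> dist (x + s *\<^sub>R h) y"
    using assms(2) by (simp add: dist_norm)
qed

lemma tau_min_ge_of_halfspace:
  assumes "solset G \<noteq> {}" "norm h = 1" "\<And>y. y \<in> solset G \<Longrightarrow> inner h (y - xb) \<le> 0"
    and "0 < t0" "0 < a" "\<And>s. 0 < s \<Longrightarrow> s \<le> t0 \<Longrightarrow> fmax G (xb + s *\<^sub>R h) \<le> a * s"
  shows "ereal (1 / a) \<le> tau_min G xb"
proof (rule tau_min_ge[OF assms(1)])
  fix \<tau> \<delta> :: real
  assume "0 < \<tau>" "0 < \<delta>"
    and bound: "\<forall>x\<in>cball xb \<delta>. infdist x (solset G) \<le> \<tau> * max (fmax G x) 0"
  define s where "s = min \<delta> t0"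
  have s: "0 < s" "s \<le> \<delta>" "s \<le> t0"
    using \<open>0 < \<delta>\<close> assms(4) by (auto simp: s_def)
  have "xb + s *\<^sub>R h \<in> cball xb \<delta>"
    using s assms(2) by (simp add: dist_norm)
  then have "s \<le> \<tau> * max (fmax G (xb + s *\<^sub>R h)) 0"
    using infdist_ge_of_halfspace[OF assms(1,2,3), of s] bound by fastforce
  also have "\<dots> \<le> \<tau> * (a * s)"
    using assms(5) assms(6)[OF s(1,3)] s(1) \<open>0 < \<tau>\<close> by (intro mult_left_mono) auto
  finally show "1 / a \<le> \<tau>"
    using s(1) assms(5) by (simp add: field_simps)
qed

lemma continuous_on_less_near:
  fixes \<psi> :: "'a::metric_space \<Rightarrow> real"
  assumes "continuous_on UNIV \<psi>" "\<psi> x < c"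
  shows "\<exists>d>0. \<forall>y. dist y x < d \<longrightarrow> \<psi> y < c"
proof -
  have "open {y. \<psi> y < c}"
    by (rule open_Collect_less[OF assms(1) continuous_on_const])
  then show ?thesis
    using assms(2) unfolding open_dist by auto
qed

text \<open>The step T = 2 \<phi> x / \<kappa> works because the slope of \<phi> on [x, x + T h] is at most its slope on
  the next segment of length s0, which stays below -\<kappa>/2 near xb.\<close>

lemma convex_on_error_bound_along_descent:
  fixes \<phi> :: "'a::real_normed_vector \<Rightarrow> real"
  assumes cvx: "convex_on UNIV \<phi>" and cont: "continuous_on UNIV \<phi>"
    and "\<phi> xb = 0" "norm h = 1" "0 < \<kappa>" "0 < s0" and descent: "\<phi> (xb + s0 *\<^sub>R h) \<le> - \<kappa> * s0"
  shows "\<exists>\<delta>>0. \<forall>x\<in>cball xb \<delta>. 0 < \<phi> x \<longrightarrow> \<phi> (x + (2 * \<phi> x / \<kappa>) *\<^sub>R h) \<le> 0"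
proof -
  have "continuous_on UNIV (\<lambda>y. \<phi> (y + s0 *\<^sub>R h) - \<phi> y)"
    by (intro continuous_intros continuous_on_compose2[OF cont]) auto
  moreover have "\<phi> (xb + s0 *\<^sub>R h) - \<phi> xb < - \<kappa> * s0 / 2"
    using descent assms(3) mult_pos_pos[OF assms(5,6)] by linarith
  ultimately obtain \<delta>1 where \<delta>1: "0 < \<delta>1"
    and step: "\<And>y. dist y xb < \<delta>1 \<Longrightarrow> \<phi> (y + s0 *\<^sub>R h) - \<phi> y < - \<kappa> * s0 / 2"
    using continuous_on_less_near by blast
  obtain d where d: "0 < d" and small: "\<And>y. dist y xb < d \<Longrightarrow> \<phi> y < \<kappa> * \<delta>1 / 4"
    using continuous_on_less_near[OF cont, of xb "\<kappa> * \<delta>1 / 4"] assms(3,5) \<delta>1 by auto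
  define \<delta> where "\<delta> = min (\<delta>1 / 2) (d / 2)"
  have "\<phi> (x + (2 * \<phi> x / \<kappa>) *\<^sub>R h) \<le> 0" if x: "x \<in> cball xb \<delta>" "0 < \<phi> x" for x
  proof -
    define T where "T = 2 * \<phi> x / \<kappa>"
    define y where "y = x + T *\<^sub>R h"
    have "dist x xb < d"
      using x(1) d by (simp add: \<delta>_def dist_commute)
    then have T: "0 < T" "T < \<delta>1 / 2"
      using small[of x] x(2) assms(5) by (simp_all add: T_def field_simps)
    have "dist y xb \<le> dist y x + dist x xb"
      by (rule dist_triangle)
    also have "dist y x = T"
      using T assms(4) by (simp add: y_def dist_norm)
    finally have "dist y xb < \<delta>1"
      using x(1) T by (simp add: \<delta>_def dist_commute)
    have "(\<phi> y - \<phi> x) / T \<le> (\<phi> (y + s0 *\<^sub>R h) - \<phi> y) / s0"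
      using order_trans[OF convex_on_line_slope_le[OF cvx, of 0 T "T + s0" x h]] T(1) assms(6)
      by (simp add: y_def algebra_simps)
    also have "\<dots> < - \<kappa> / 2"
      using step[OF \<open>dist y xb < \<delta>1\<close>] assms(6) by (simp add: field_simps)
    finally have "\<phi> y < \<phi> x - \<kappa> * T / 2"
      using T(1) by (simp add: field_simps)
    then show ?thesis
      using assms(5) by (simp add: y_def T_def)
  qed
  moreover have "0 < \<delta>"
    using \<delta>1 d by (simp add: \<delta>_def)
  ultimately show ?thesis
    by blast
qed

section \<open>Admissible perturbations\<close>

text \<open>The perturbations G allowed in condition (ii), with first-order tolerance \<epsilon>.\<close>

definition admissible_perturbation ::
    "('i::topological_space \<Rightarrow> 'a::real_normed_vector \<Rightarrow> real) \<Rightarrow> 'a \<Rightarrow> real \<Rightarrow> ('i \<Rightarrow> 'a \<Rightarrow> real) \<Rightarrow> bool"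
  where "admissible_perturbation F xb \<epsilon> G \<longleftrightarrow>
           continuous_on UNIV (\<lambda>(i, x). G i x)
         \<and> (\<forall>i. convex_on UNIV (G i))
         \<and> fmax G xb = 0
         \<and> (mindir F xb < 0 \<longrightarrow> active G xb \<subseteq> active F xb)
         \<and> (mindir F xb > 0 \<longrightarrow> active F xb \<subseteq> active G xb)
         \<and> (\<forall>i \<in> active F xb \<inter> active G xb.
               Limsup (at xb) (\<lambda>x. ereal (\<bar>F i x - G i x - (F i xb - G i xb)\<bar> / norm (x - xb)))
                 \<le> ereal \<epsilon>)"

lemma admissible_perturbationD:
  assumes "admissible_perturbation F xb \<epsilon> G"
  shows "continuous_on UNIV (\<lambda>i. G i x)" "convex_on UNIV (G i)" "fmax G xb = 0"
  using assms continuous_on_slice by (auto simp: admissible_perturbation_def)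

lemma Limsup_slope_le_imp_ray_bound:
  fixes \<phi> :: "'a::real_normed_vector \<Rightarrow> real"
  assumes "Limsup (at xb) (\<lambda>x. ereal (\<bar>\<phi> x - \<phi> xb\<bar> / norm (x - xb))) \<le> ereal \<epsilon>"
    and "\<epsilon> < e" "norm h = 1"
  shows "\<exists>d>0. \<forall>s. 0 < s \<longrightarrow> s < d \<longrightarrow> \<bar>\<phi> (xb + s *\<^sub>R h) - \<phi> xb\<bar> < e * s"
proof -
  have "Limsup (at xb) (\<lambda>x. ereal (\<bar>\<phi> x - \<phi> xb\<bar> / norm (x - xb))) < ereal e"
    using assms(1,2) by (simp add: le_less_trans)
  from Limsup_lessD[OF this] have "\<forall>\<^sub>F y in at xb. \<bar>\<phi> y - \<phi> xb\<bar> / norm (y - xb) < e"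
    by simp
  then obtain d where d: "0 < d"
    and ratio: "\<And>y. y \<noteq> xb \<Longrightarrow> dist y xb < d \<Longrightarrow> \<bar>\<phi> y - \<phi> xb\<bar> / norm (y - xb) < e"
    unfolding eventually_at by auto
  have "h \<noteq> 0"
    using assms(3) by auto
  then have "\<bar>\<phi> (xb + s *\<^sub>R h) - \<phi> xb\<bar> < e * s" if "0 < s" "s < d" for s
    using ratio[of "xb + s *\<^sub>R h"] that assms(3) by (simp add: dist_norm divide_less_eq)
  then show ?thesis
    using d by blast
qed

lemma admissible_perturbation_close_on_rays:
  assumes G: "admissible_perturbation F xb \<epsilon> G" and f0: "fmax F xb = 0"
    and i: "i \<in> active F xb" "i \<in> active G xb" and "\<epsilon> < e" "norm h = 1"
  shows "\<exists>d>0. \<forall>s. 0 < s \<longrightarrow> s < d \<longrightarrow> \<bar>F i (xb + s *\<^sub>R h) - G i (xb + s *\<^sub>R h)\<bar> < e * s"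
proof -
  have "F i xb = 0" "G i xb = 0"
    using i f0 admissible_perturbationD(3)[OF G] by (simp_all add: active_def)
  moreover have "Limsup (at xb) (\<lambda>y. ereal (\<bar>F i y - G i y - (F i xb - G i xb)\<bar> / norm (y - xb)))
      \<le> ereal \<epsilon>"
    using G i by (simp add: admissible_perturbation_def)
  ultimately show ?thesis
    using Limsup_slope_le_imp_ray_bound[of xb "\<lambda>y. F i y - G i y" \<epsilon> e h] assms(5,6) by simp
qed

lemma admissible_perturbation_sharp_growth:
  fixes F :: "'i::topological_space \<Rightarrow> 'a::euclidean_space \<Rightarrow> real"
  assumes cpt: "compact (UNIV :: 'i set)" and cont: "\<And>x. continuous_on UNIV (\<lambda>i. F i x)"
    and cvx: "\<And>i. convex_on UNIV (F i)" and f0: "fmax F xb = 0"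
    and \<kappa>: "0 < \<kappa>" "4 * \<kappa> \<le> mindir F xb"
    and G: "admissible_perturbation F xb \<kappa> G"
  shows "\<kappa> * norm (x - xb) \<le> fmax G x"
proof (cases "x = xb")
  case True
  then show ?thesis
    using admissible_perturbationD(3)[OF G] by simp
next
  case False
  note Gcont = admissible_perturbationD(1)[OF G] and Gcvx = admissible_perturbationD(2)[OF G]
  define t where "t = norm (x - xb)"
  define h where "h = (1 / t) *\<^sub>R (x - xb)"
  have t: "0 < t" "xb + t *\<^sub>R h = x" and h: "norm h = 1"
    using False by (simp_all add: t_def h_def)
  have "3 * \<kappa> < dirderiv (fmax F) xb h"
    using \<kappa> mindir_le_dirderiv[OF convex_on_fmax[OF cpt cont cvx] h, of xb] by linarith
  then obtain i where Fi0: "F i xb = 0" and Fi: "\<And>s. 0 < s \<Longrightarrow> 3 * \<kappa> * s \<le> F i (xb + s *\<^sub>R h)"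
    using dirderiv_fmax_gt_imp_active_index[OF cpt cont cvx f0] by blast
  have iF: "i \<in> active F xb"
    using Fi0 f0 by (simp add: active_def)
  then have iG: "i \<in> active G xb"
    using G \<kappa> by (auto simp: admissible_perturbation_def)
  then have Gi0: "G i xb = 0"
    using admissible_perturbationD(3)[OF G] by (simp add: active_def)
  obtain d where d: "0 < d"
    and close: "\<And>s. 0 < s \<Longrightarrow> s < d \<Longrightarrow> \<bar>F i (xb + s *\<^sub>R h) - G i (xb + s *\<^sub>R h)\<bar> < 2 * \<kappa> * s"
    using admissible_perturbation_close_on_rays[OF G f0 iF iG _ h, of "2 * \<kappa>"] \<kappa> by auto
  define s where "s = min t (d / 2)"
  have s: "0 < s" "s \<le> t" "s < d"
    using t d by (auto simp: s_def)
  have "\<kappa> * s < G i (xb + s *\<^sub>R h)"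
    using Fi[OF s(1)] close[OF s(1,3)] by linarith
  also have "G i (xb + s *\<^sub>R h) \<le> s * (G i x / t)"
    using convex_on_slope_mono[OF Gcvx[of i] s(1,2), of xb h] Gi0 t s(1) by (simp add: field_simps)
  finally have "\<kappa> * t < G i x"
    using s(1) t by (simp add: field_simps)
  also have "G i x \<le> fmax G x"
    by (rule fmax_upper[of G, OF cpt Gcont])
  finally show ?thesis
    by (simp add: t_def)
qed

lemma admissible_perturbation_error_bound_pos:
  fixes F :: "'i::topological_space \<Rightarrow> 'a::euclidean_space \<Rightarrow> real"
  assumes cpt: "compact (UNIV :: 'i set)" and cont: "\<And>x. continuous_on UNIV (\<lambda>i. F i x)"
    and cvx: "\<And>i. convex_on UNIV (F i)" and f0: "fmax F xb = 0"
    and m: "0 < mindir F xb"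
    and G: "admissible_perturbation F xb (mindir F xb / 4) G"
  shows "tau_min G xb \<le> ereal (4 / mindir F xb)"
proof -
  define \<kappa> where "\<kappa> = mindir F xb / 4"
  have \<kappa>: "0 < \<kappa>" "4 * \<kappa> \<le> mindir F xb"
    using m by (simp_all add: \<kappa>_def)
  note growth = admissible_perturbation_sharp_growth[OF cpt cont cvx f0 \<kappa> G[folded \<kappa>_def]]
  note Gcont = admissible_perturbationD(1)[OF G]
  have "y \<in> solset G \<longleftrightarrow> y = xb" for y
  proof
    assume "y \<in> solset G"
    then have "\<kappa> * norm (y - xb) \<le> 0"
      using growth[of y] solset_iff_fmax_nonpos[of G y, OF cpt Gcont] by linarith
    then show "y = xb"
      using \<kappa>(1) by (simp add: mult_le_0_iff)
  qed (use admissible_perturbationD(3)[OF G] solset_iff_fmax_nonpos[of G xb, OF cpt Gcont] in simp)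
  then have "solset G = {xb}"
    by blast
  moreover have "dist x xb \<le> (1 / \<kappa>) * max (fmax G x) 0" for x
    using growth[of x] \<kappa>(1) by (simp add: dist_norm field_simps)
  ultimately have "tau_min G xb \<le> ereal (1 / \<kappa>)"
    using \<kappa>(1) by (intro tau_min_le[of _ 1]) auto
  then show ?thesis
    by (simp add: \<kappa>_def)
qed

lemma admissible_perturbation_descent:
  fixes F :: "'i::topological_space \<Rightarrow> 'a::euclidean_space \<Rightarrow> real"
  assumes cpt: "compact (UNIV :: 'i set)" and cont: "\<And>x. continuous_on UNIV (\<lambda>i. F i x)"
    and cvx: "\<And>i. convex_on UNIV (F i)" and f0: "fmax F xb = 0"
    and \<kappa>: "0 < \<kappa>" and h: "norm h = 1" "dirderiv (fmax F) xb h < - 4 * \<kappa>"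
    and m: "mindir F xb < 0" and G: "admissible_perturbation F xb (2 * \<kappa>) G"
  shows "\<exists>s0>0. fmax G (xb + s0 *\<^sub>R h) \<le> - \<kappa> * s0"
proof -
  note Gcont = admissible_perturbationD(1)[OF G] and Gcvx = admissible_perturbationD(2)[OF G]
    and g0 = admissible_perturbationD(3)[OF G]
  obtain t where t: "0 < t" "\<And>s. 0 < s \<Longrightarrow> s \<le> t \<Longrightarrow> fmax F (xb + s *\<^sub>R h) < - 4 * \<kappa> * s"
    using convex_on_dirderiv_lessD[OF convex_on_fmax[OF cpt cont cvx] h(2)] f0 by auto
  have active: "\<exists>s>0. G i (xb + s *\<^sub>R h) < - \<kappa> * s" if Gi0: "G i xb = 0" for i
  proof -
    have iG: "i \<in> active G xb"
      using Gi0 g0 by (simp add: active_def)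
    then have iF: "i \<in> active F xb"
      using G m by (auto simp: admissible_perturbation_def)
    obtain d where d: "0 < d"
      and close: "\<And>s. 0 < s \<Longrightarrow> s < d \<Longrightarrow> \<bar>F i (xb + s *\<^sub>R h) - G i (xb + s *\<^sub>R h)\<bar> < 3 * \<kappa> * s"
      using admissible_perturbation_close_on_rays[OF G f0 iF iG _ h(1), of "3 * \<kappa>"] \<kappa> by auto
    define s where "s = min t (d / 2)"
    have s: "0 < s" "s \<le> t" "s < d"
      using t d by (auto simp: s_def)
    have "F i (xb + s *\<^sub>R h) \<le> fmax F (xb + s *\<^sub>R h)"
      by (rule fmax_upper[of F, OF cpt cont])
    then have "G i (xb + s *\<^sub>R h) < - \<kappa> * s"
      using t(2)[OF s(1,2)] close[OF s(1,3)] by linarith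
    then show ?thesis
      using s(1) by blast
  qed
  have nonpos: "G i xb \<le> 0" for i
    using fmax_upper[of G xb, OF cpt Gcont] g0 by simp
  obtain s0 where s0: "0 < s0" "\<forall>j s. 0 < s \<longrightarrow> s \<le> s0 \<longrightarrow> G j (xb + s *\<^sub>R h) \<le> - \<kappa> * s"
    using uniform_slope_bound[OF cpt Gcont Gcvx nonpos active] by blast
  have "fmax G (xb + s0 *\<^sub>R h) \<le> - \<kappa> * s0"
    using s0 by (intro fmax_least) simp
  then show ?thesis
    using s0(1) by blast
qed

lemma admissible_perturbation_error_bound_neg:
  fixes F :: "'i::topological_space \<Rightarrow> 'a::euclidean_space \<Rightarrow> real"
  assumes cpt: "compact (UNIV :: 'i set)" and cont: "\<And>x. continuous_on UNIV (\<lambda>i. F i x)"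
    and cvx: "\<And>i. convex_on UNIV (F i)" and f0: "fmax F xb = 0"
    and m: "mindir F xb < 0"
    and G: "admissible_perturbation F xb (- mindir F xb / 4) G"
  shows "tau_min G xb \<le> ereal (16 / - mindir F xb)"
proof -
  define \<kappa> where "\<kappa> = - mindir F xb / 8"
  have \<kappa>: "0 < \<kappa>"
    using m by (simp add: \<kappa>_def)
  have G': "admissible_perturbation F xb (2 * \<kappa>) G"
    using G by (simp add: \<kappa>_def)
  note Gcont = admissible_perturbationD(1)[OF G] and Gcvx = admissible_perturbationD(2)[OF G]
    and g0 = admissible_perturbationD(3)[OF G]
  obtain h where h: "norm h = 1" "dirderiv (fmax F) xb h < - 4 * \<kappa>"
    using mindir_lessD[of F xb "- 4 * \<kappa>"] m by (auto simp: \<kappa>_def)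
  obtain s0 where s0: "0 < s0" "fmax G (xb + s0 *\<^sub>R h) \<le> - \<kappa> * s0"
    using admissible_perturbation_descent[OF cpt cont cvx f0 \<kappa> h m G'] by blast
  obtain \<delta> where \<delta>: "0 < \<delta>"
    and repair: "\<forall>x\<in>cball xb \<delta>. 0 < fmax G x \<longrightarrow> fmax G (x + (2 * fmax G x / \<kappa>) *\<^sub>R h) \<le> 0"
    using convex_on_error_bound_along_descent[OF convex_on_fmax[OF cpt Gcont Gcvx]
        continuous_on_fmax[OF cpt Gcont Gcvx] g0 h(1) \<kappa> s0]
    by blast
  have in_solset: "y \<in> solset G \<longleftrightarrow> fmax G y \<le> 0" for y
    using solset_iff_fmax_nonpos[of G y, OF cpt Gcont] .
  have "infdist x (solset G) \<le> (2 / \<kappa>) * max (fmax G x) 0" if x: "x \<in> cball xb \<delta>" for x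
  proof (cases "0 < fmax G x")
    case True
    then have "x + (2 * fmax G x / \<kappa>) *\<^sub>R h \<in> solset G"
      using repair x by (simp add: in_solset)
    then have "infdist x (solset G) \<le> dist x (x + (2 * fmax G x / \<kappa>) *\<^sub>R h)"
      by (rule infdist_le)
    also have "\<dots> = (2 / \<kappa>) * max (fmax G x) 0"
      using True \<kappa> h(1) by (simp add: dist_norm)
    finally show ?thesis .
  next
    case False
    then have "x \<in> solset G"
      by (simp add: in_solset)
    then show ?thesis
      using False by simp
  qed
  moreover have "solset G \<noteq> {}"
    using in_solset[of xb] g0 by auto
  ultimately have "tau_min G xb \<le> ereal (2 / \<kappa>)"
    by (intro tau_min_le[OF _ \<delta>]) (use \<kappa> in auto)
  then show ?thesis
    by (simp add: \<kappa>_def)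
qed

lemma admissible_perturbation_linear_tilt:
  fixes F :: "'i::t2_space \<Rightarrow> 'a::euclidean_space \<Rightarrow> real"
  assumes cpt: "compact (UNIV :: 'i set)" and cont: "\<And>x. continuous_on UNIV (\<lambda>i. F i x)"
    and cvx: "\<And>i. convex_on UNIV (F i)" and f0: "fmax F xb = 0"
    and u: "norm u \<le> 1" and "0 < \<epsilon>"
  shows "admissible_perturbation F xb \<epsilon> (\<lambda>i x. F i x + \<epsilon> * inner u (x - xb))"
proof -
  define G where "G = (\<lambda>i x. F i x + \<epsilon> * inner u (x - xb))"
  have "continuous_on UNIV (\<lambda>p. (\<lambda>(i, x). F i x) p + \<epsilon> * inner u (snd p - xb))"
    by (intro continuous_intros continuous_on_convex_family[OF cpt cont cvx])
  then have "continuous_on UNIV (\<lambda>(i, x). G i x)"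
    by (simp add: G_def case_prod_unfold)
  moreover have "convex_on UNIV (G i)" for i
    unfolding G_def by (intro convex_on_add cvx convex_on_inner_affine)
  moreover have g0: "fmax G xb = 0"
    using f0 by (simp add: G_def fmax_add[OF cpt cont])
  moreover have "active G xb = active F xb"
    using f0 g0 by (simp add: active_def G_def)
  moreover have "Limsup (at xb) (\<lambda>x. ereal (\<bar>F i x - G i x - (F i xb - G i xb)\<bar> / norm (x - xb)))
      \<le> ereal \<epsilon>" for i
  proof (intro Limsup_bounded always_eventually allI)
    fix x
    have "\<bar>F i x - G i x - (F i xb - G i xb)\<bar> = \<epsilon> * \<bar>inner u (x - xb)\<bar>"
      using \<open>0 < \<epsilon>\<close> by (simp add: G_def abs_mult)
    also have "\<dots> \<le> \<epsilon> * norm (x - xb)"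
    proof -
      have "\<bar>inner u (x - xb)\<bar> \<le> norm u * norm (x - xb)"
        by (rule Cauchy_Schwarz_ineq2)
      also have "\<dots> \<le> norm (x - xb)"
        using u by (intro mult_left_le_one_le) auto
      finally show ?thesis
        using \<open>0 < \<epsilon>\<close> by simp
    qed
    finally show "ereal (\<bar>F i x - G i x - (F i xb - G i xb)\<bar> / norm (x - xb)) \<le> ereal \<epsilon>"
      using \<open>0 < \<epsilon>\<close> by (cases "x = xb") (auto simp: divide_le_eq mult.commute)
  qed
  ultimately show ?thesis
    by (simp add: admissible_perturbation_def G_def)
qed

lemma tau_min_linear_tilt_unbounded:
  fixes F :: "'i::topological_space \<Rightarrow> 'a::euclidean_space \<Rightarrow> real"
  assumes cpt: "compact (UNIV :: 'i set)" and cont: "\<And>x. continuous_on UNIV (\<lambda>i. F i x)"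
    and cvx: "\<And>i. convex_on UNIV (F i)" and f0: "fmax F xb = 0"
    and m: "mindir F xb = 0" and "0 < c" "0 < \<epsilon>"
  shows "\<exists>u. norm u \<le> 1 \<and> ereal c < tau_min (\<lambda>i x. F i x + \<epsilon> * inner u (x - xb)) xb"
proof -
  define \<eta> where "\<eta> = 1 / (4 * c)"
  define \<mu> where "\<mu> = min 1 (\<eta> / \<epsilon>)"
  have \<eta>: "0 < \<eta>" and \<mu>: "0 < \<mu>" "\<mu> \<le> 1" "\<epsilon> * \<mu> \<le> \<eta>"
    using \<open>0 < c\<close> \<open>0 < \<epsilon>\<close> by (auto simp: \<eta>_def \<mu>_def min_def field_simps)
  note fcvx = convex_on_fmax[OF cpt cont cvx]
  obtain h where h: "norm h = 1" "dirderiv (fmax F) xb h < \<eta>"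
    using mindir_lessD[of F xb \<eta>] m \<eta> by auto
  obtain t0 where t0: "0 < t0" "\<And>s. 0 < s \<Longrightarrow> s \<le> t0 \<Longrightarrow> fmax F (xb + s *\<^sub>R h) < \<eta> * s"
    using convex_on_dirderiv_lessD[OF fcvx h(2)] f0 by auto
  have f_nonneg: "0 \<le> fmax F y" for y
    using convex_on_nonneg_of_dirderiv_nonneg[OF fcvx f0] mindir_le_dirderiv[OF fcvx] m by metis
  define G where "G = (\<lambda>i x. F i x + \<epsilon> * inner (\<mu> *\<^sub>R h) (x - xb))"
  have Gcont: "continuous_on UNIV (\<lambda>i. G i x)" for x
    unfolding G_def using cont by (intro continuous_intros)
  have fG: "fmax G x = fmax F x + \<epsilon> * \<mu> * inner h (x - xb)" for x
    unfolding G_def by (simp add: fmax_add[OF cpt cont])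
  have halfspace: "inner h (y - xb) \<le> 0" if "y \<in> solset G" for y
  proof -
    have "\<epsilon> * \<mu> * inner h (y - xb) \<le> - fmax F y"
      using that fG[of y] solset_iff_fmax_nonpos[of G y, OF cpt Gcont] by simp
    moreover have "0 < \<epsilon> * \<mu>"
      using \<open>0 < \<epsilon>\<close> \<mu>(1) by simp
    ultimately show ?thesis
      using f_nonneg[of y] mult_le_cancel_left_pos[of "\<epsilon> * \<mu>" "inner h (y - xb)" 0] by simp
  qed
  have xb: "xb \<in> solset G"
    using fG[of xb] f0 solset_iff_fmax_nonpos[of G xb, OF cpt Gcont] by simp
  have slow: "fmax G (xb + s *\<^sub>R h) \<le> (2 * \<eta>) * s" if "0 < s" "s \<le> t0" for s
  proof -
    have "fmax G (xb + s *\<^sub>R h) = fmax F (xb + s *\<^sub>R h) + \<epsilon> * \<mu> * s"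
      using fG h(1) by (simp add: dot_square_norm power2_eq_square)
    also have "\<dots> \<le> \<eta> * s + \<eta> * s"
      using t0(2)[OF that] \<mu>(3) that(1) by (intro add_mono mult_right_mono) auto
    finally show ?thesis
      by simp
  qed
  have "ereal (1 / (2 * \<eta>)) \<le> tau_min G xb"
    using xb \<eta> by (intro tau_min_ge_of_halfspace[OF _ h(1) halfspace t0(1) _ slow]) auto
  moreover have "ereal c < ereal (1 / (2 * \<eta>))"
    using \<open>0 < c\<close> by (simp add: \<eta>_def)
  ultimately have "ereal c < tau_min G xb"
    by (meson less_le_trans)
  then show ?thesis
    using \<mu> h(1) unfolding G_def by (intro exI[of _ "\<mu> *\<^sub>R h"]) auto
qed

theorem theorem12:
  fixes F :: "'i::t2_space \<Rightarrow> 'a::euclidean_space \<Rightarrow> real" and xb :: 'a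
  assumes "compact (UNIV :: 'i set)"
    and "\<And>i. convex_on UNIV (F i)"
    and "\<And>x. continuous_on UNIV (\<lambda>i. F i x)"
    and "fmax F xb = 0"
  shows "(mindir F xb \<noteq> 0
      \<longleftrightarrow> (\<exists>c>0. \<exists>\<epsilon>>0. \<forall>G :: 'i \<Rightarrow> 'a \<Rightarrow> real.
             continuous_on UNIV (\<lambda>(i, x). G i x)
           \<and> (\<forall>i. convex_on UNIV (G i))
           \<and> fmax G xb = 0
           \<and> (mindir F xb < 0 \<longrightarrow> active G xb \<subseteq> active F xb)
           \<and> (mindir F xb > 0 \<longrightarrow> active F xb \<subseteq> active G xb)
           \<and> (\<forall>i \<in> active F xb \<inter> active G xb.
                 Limsup (at xb) (\<lambda>x. ereal (\<bar>F i x - G i x - (F i xb - G i xb)\<bar> / norm (x - xb)))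
                   \<le> ereal \<epsilon>)
           \<longrightarrow> tau_min G xb \<le> ereal c))
    \<and> (mindir F xb \<noteq> 0
      \<longleftrightarrow> (\<exists>c>0. \<exists>\<epsilon>>0. \<forall>u :: 'a. norm u \<le> 1 \<longrightarrow>
             tau_min (\<lambda>i x. F i x + \<epsilon> * inner u (x - xb)) xb \<le> ereal c))"
  (is "(?A \<longleftrightarrow> ?B) \<and> (?A \<longleftrightarrow> ?C)")
proof -
  note hyps = assms(1,3,2,4)
  have B: "?B \<longleftrightarrow> (\<exists>c>0. \<exists>\<epsilon>>0. \<forall>G. admissible_perturbation F xb \<epsilon> G \<longrightarrow> tau_min G xb \<le> ereal c)"
    unfolding admissible_perturbation_def ..
  have "?B" if "?A"
  proof (cases "mindir F xb < 0")
    case True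
    show ?thesis
      unfolding B
    proof (intro exI conjI allI impI)
      show "0 < 16 / - mindir F xb" "0 < - mindir F xb / 4"
        using True by auto
    qed (rule admissible_perturbation_error_bound_neg[OF hyps True])
  next
    case False
    with that have "0 < mindir F xb" by simp
    show ?thesis
      unfolding B
    proof (intro exI conjI allI impI)
      show "0 < 4 / mindir F xb" "0 < mindir F xb / 4"
        using \<open>0 < mindir F xb\<close> by auto
    qed (rule admissible_perturbation_error_bound_pos[OF hyps \<open>0 < mindir F xb\<close>])
  qed
  moreover have "?C" if "?B"
    using that admissible_perturbation_linear_tilt[OF hyps] unfolding B by blast
  moreover have "?A" if "?C"
    using that tau_min_linear_tilt_unbounded[OF hyps] by (meson not_le)
  ultimately show ?thesis
    by blast
qed

end
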